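(* Let $\mathfrak{X}$ be a Bourgain–Delbaen space determined by $(\Gamma_q,i_q)_q$, let $\Gamma'$ be an infinite subset of $\Gamma$, for all $q$ set $\Gamma_q'=\Gamma'\cap\Gamma_q$, $\Delta_q'=\Gamma'\cap\Delta_q$, and let $q_0=\min\{q:\Gamma_q'\neq\varnothing\}$. The following are equivalent: (a) $\Gamma'$ is self-determined; (b) for all $q\geqslant q_0$, $\langle\{d_\gamma^*:\gamma\in\Gamma_q'\}\rangle=\langle\{e_\gamma^*:\gamma\in\Gamma_q'\}\rangle$; (c) $\langle\{d_\gamma^*:\gamma\in\Gamma_{q_0}'\}\rangle=\langle\{e_\gamma^*:\gamma\in\Gamma_{q_0}'\}\rangle$ and for all $q\geqslant q_0$, $\langle\{c_\gamma^*:\gamma\in\Delta_{q+1}'\}\rangle\subset\langle\{e_\gamma^*\circ P_E:\gamma\in\Gamma_q',\ E\text{ an interval of }\mathbb{N}\}\rangle$; (d) for all $\gamma\in\Gamma\setminus\Gamma'$ and $\eta\in\Gamma'$, $e_\eta^*(d_\gamma)=0$; (e) for all $\gamma\in\Gamma\setminus\Gamma'$ and $\eta\in\Gamma'$, $c_\eta^*(d_\gamma)=0$.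
   Context: Bourgain–Delbaen spaces: $(\Gamma_q)_{q\geqslant1}$ is a strictly increasing sequence of non-empty finite sets, $\Gamma=\bigcup_q\Gamma_q$, and $i_q:\ell_\infty(\Gamma_q)\to\ell_\infty(\Gamma)$ are linear extension operators (i.e. $i_q(x)|_{\Gamma_q}=x$) with $C=\sup_q\|i_q\|<\infty$, which are compatible: for $p<q$, $i_p=i_q\circ r_q\circ i_p$, where $r_q:\ell_\infty(\Gamma)\to\ell_\infty(\Gamma_q)$ is restriction. Set $\Delta_1=\Gamma_1$, $\Delta_{q+1}=\Gamma_{q+1}\setminus\Gamma_q$, and for $\gamma\in\Delta_q$ let $d_\gamma=i_q(e_\gamma)$. The space $\mathfrak{X}$ is the closed linear span of $\{d_\gamma:\gamma\in\Gamma\}$ in $\ell_\infty(\Gamma)$. With $M_q=\langle\{d_\gamma:\gamma\in\Delta_q\}\rangle$, $(M_q)_q$ is an FDD of $\mathfrak{X}$ and $P_E$ denotes the associated projection onto $\bigoplus_{q\in E}M_q$ for an interval $E\subset\mathbb{N}$. For $\gamma\in\Gamma$, $e_\gamma^*$ is the evaluation at coordinate $\gamma$ restricted to $\mathfrak{X}$, $(d_\gamma^* )_{\gamma\in\Gamma}$ are the functionals biorthogonal to the basis $(d_\gamma)_\gamma$ (for $\gamma\in\Delta_q$, $d_\gamma^*=e_\gamma^*\circ P_{\{q\}}$), and $c_\gamma^*=e_\gamma^*-d_\gamma^*$. An infinite subset $\Gamma'\subseteq\Gamma$ is self-determined if for every $\gamma\in\Gamma'$ the functional $d_\gamma^*$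 lies in the linear span of $\{e_\eta^*:\eta\in\Gamma'\}$. $\langle\cdot\rangle$ denotes linear span. *)

theory Defs
  imports Complex_Main
begin

text \<open>Elements of l_infinity(Gamma) and l_infinity(Gamma_q) are modelled as functions
  'g => real vanishing outside Gamma (resp. Gamma_q).\<close>

definition supp_in :: "'g set \<Rightarrow> ('g \<Rightarrow> real) \<Rightarrow> bool" where
  "supp_in A x \<longleftrightarrow> (\<forall>\<gamma>. \<gamma> \<notin> A \<longrightarrow> x \<gamma> = 0)"

definition restr :: "'g set \<Rightarrow> ('g \<Rightarrow> real) \<Rightarrow> ('g \<Rightarrow> real)" where
  "restr A x = (\<lambda>\<gamma>. if \<gamma> \<in> A then x \<gamma> else 0)"

definition unit_vec :: "'g \<Rightarrow> 'g \<Rightarrow> real" where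
  "unit_vec \<gamma> = (\<lambda>\<eta>. if \<eta> = \<gamma> then 1 else 0)"

definition BD_Gamma :: "(nat \<Rightarrow> 'g set) \<Rightarrow> 'g set" where
  "BD_Gamma Gamma = (\<Union>q\<in>{1..}. Gamma q)"

definition BD_system :: "(nat \<Rightarrow> 'g set) \<Rightarrow> (nat \<Rightarrow> ('g \<Rightarrow> real) \<Rightarrow> ('g \<Rightarrow> real)) \<Rightarrow> bool" where
  "BD_system Gamma i \<longleftrightarrow>
     (\<forall>q\<ge>1. finite (Gamma q) \<and> Gamma q \<noteq> {} \<and> Gamma q \<subset> Gamma (Suc q)) \<and>
     (\<forall>q\<ge>1. \<forall>x y a b. supp_in (Gamma q) x \<longrightarrow> supp_in (Gamma q) y \<longrightarrow>
        i q (\<lambda>\<gamma>. a * x \<gamma> + b * y \<gamma>) = (\<lambda>\<gamma>. a * i q x \<gamma> + b * i q y \<gamma>)) \<and>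
     (\<forall>q\<ge>1. \<forall>x. supp_in (Gamma q) x \<longrightarrow>
        supp_in (BD_Gamma Gamma) (i q x) \<and> (\<forall>\<gamma>\<in>Gamma q. i q x \<gamma> = x \<gamma>)) \<and>
     (\<exists>C. \<forall>q\<ge>1. \<forall>x M. supp_in (Gamma q) x \<longrightarrow> (\<forall>\<gamma>. \<bar>x \<gamma>\<bar> \<le> M) \<longrightarrow>
        (\<forall>\<gamma>. \<bar>i q x \<gamma>\<bar> \<le> C * M)) \<and>
     (\<forall>p q x. 1 \<le> p \<longrightarrow> p < q \<longrightarrow> supp_in (Gamma p) x \<longrightarrow>
        i p x = i q (restr (Gamma q) (i p x)))"

definition level :: "(nat \<Rightarrow> 'g set) \<Rightarrow> 'g \<Rightarrow> nat" where
  "level Gamma \<gamma> = (LEAST q. 1 \<le> q \<and> \<gamma> \<in> Gamma q)"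

definition Delta :: "(nat \<Rightarrow> 'g set) \<Rightarrow> nat \<Rightarrow> 'g set" where
  "Delta Gamma q = (if q = 0 then {} else if q = 1 then Gamma 1 else Gamma q - Gamma (q - 1))"

definition dvec :: "(nat \<Rightarrow> 'g set) \<Rightarrow> (nat \<Rightarrow> ('g \<Rightarrow> real) \<Rightarrow> ('g \<Rightarrow> real)) \<Rightarrow> 'g \<Rightarrow> 'g \<Rightarrow> real" where
  "dvec Gamma i \<gamma> = i (level Gamma \<gamma>) (unit_vec \<gamma>)"

text \<open>The space X: closure (in the sup norm) of the linear span of the d_gamma.\<close>
definition BD_X :: "(nat \<Rightarrow> 'g set) \<Rightarrow> (nat \<Rightarrow> ('g \<Rightarrow> real) \<Rightarrow> ('g \<Rightarrow> real)) \<Rightarrow> ('g \<Rightarrow> real) set" where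
  "BD_X Gamma i = {x. \<forall>\<epsilon>>0. \<exists>S c. finite S \<and> S \<subseteq> BD_Gamma Gamma \<and>
      (\<forall>\<eta>. \<bar>x \<eta> - (\<Sum>\<gamma>\<in>S. c \<gamma> * dvec Gamma i \<gamma> \<eta>)\<bar> \<le> \<epsilon>)}"

text \<open>FDD projections: P_{[1,q]} = i_q o r_q on X (P_{[1,0]} = 0).\<close>
definition Pinit :: "(nat \<Rightarrow> 'g set) \<Rightarrow> (nat \<Rightarrow> ('g \<Rightarrow> real) \<Rightarrow> ('g \<Rightarrow> real)) \<Rightarrow> nat \<Rightarrow> ('g \<Rightarrow> real) \<Rightarrow> ('g \<Rightarrow> real)" where
  "Pinit Gamma i q x = (if q = 0 then (\<lambda>_. 0) else i q (restr (Gamma q) x))"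

definition Pint :: "(nat \<Rightarrow> 'g set) \<Rightarrow> (nat \<Rightarrow> ('g \<Rightarrow> real) \<Rightarrow> ('g \<Rightarrow> real)) \<Rightarrow> nat set \<Rightarrow> ('g \<Rightarrow> real) \<Rightarrow> ('g \<Rightarrow> real)" where
  "Pint Gamma i E x = (if finite E
      then (\<lambda>\<eta>. \<Sum>q\<in>E. Pinit Gamma i q x \<eta> - Pinit Gamma i (q - 1) x \<eta>)
      else (\<lambda>\<eta>. x \<eta> - Pinit Gamma i (Inf E - 1) x \<eta>))"

definition nat_interval :: "nat set \<Rightarrow> bool" where
  "nat_interval E \<longleftrightarrow> 0 \<notin> E \<and> (\<forall>a\<in>E. \<forall>c\<in>E. \<forall>b. a \<le> b \<longrightarrow> b \<le> c \<longrightarrow> b \<in> E)"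

definition ecoord :: "'g \<Rightarrow> ('g \<Rightarrow> real) \<Rightarrow> real" where
  "ecoord \<gamma> = (\<lambda>x. x \<gamma>)"

definition dstar :: "(nat \<Rightarrow> 'g set) \<Rightarrow> (nat \<Rightarrow> ('g \<Rightarrow> real) \<Rightarrow> ('g \<Rightarrow> real)) \<Rightarrow> 'g \<Rightarrow> ('g \<Rightarrow> real) \<Rightarrow> real" where
  "dstar Gamma i \<gamma> = (\<lambda>x. Pint Gamma i {level Gamma \<gamma>} x \<gamma>)"

definition cstar :: "(nat \<Rightarrow> 'g set) \<Rightarrow> (nat \<Rightarrow> ('g \<Rightarrow> real) \<Rightarrow> ('g \<Rightarrow> real)) \<Rightarrow> 'g \<Rightarrow> ('g \<Rightarrow> real) \<Rightarrow> real" where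
  "cstar Gamma i \<gamma> = (\<lambda>x. ecoord \<gamma> x - dstar Gamma i \<gamma> x)"

definition fspan :: "('v set) \<Rightarrow> (('v \<Rightarrow> real) set) \<Rightarrow> ('v \<Rightarrow> real) set" where
  "fspan X F = {\<phi>. \<exists>S c. finite S \<and> S \<subseteq> F \<and> (\<forall>x\<in>X. \<phi> x = (\<Sum>f\<in>S. c f * f x))}"

definition self_determined :: "(nat \<Rightarrow> 'g set) \<Rightarrow> (nat \<Rightarrow> ('g \<Rightarrow> real) \<Rightarrow> ('g \<Rightarrow> real)) \<Rightarrow> 'g set \<Rightarrow> bool" where
  "self_determined Gamma i G' \<longleftrightarrow> infinite G' \<and> G' \<subseteq> BD_Gamma Gamma \<and>
     (\<forall>\<gamma>\<in>G'. dstar Gamma i \<gamma> \<in> fspan (BD_X Gamma i) (ecoord ` G'))"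

end

theory Submission
  imports Defs
begin

text \<open>
  For \<eta> of level q the functional c*_\<eta> = e*_\<eta> - d*_\<eta> is evaluation at \<eta> after the
  projection P_[1,q-1], so c*_\<eta> = \<Sum> a_\<eta>\<nu> e*_\<nu> with \<nu> ranging over \<Gamma>_(q-1) (the a_\<eta>\<nu> are
  the \<open>cstar_coeff \<eta> \<nu>\<close>), and d_\<gamma>(\<eta>) = c*_\<eta>(d_\<gamma>) whenever \<gamma> \<noteq> \<eta>. All five conditions are
  equivalent to: for every \<eta> \<in> \<Gamma>' the coefficients a_\<eta>\<nu> with \<nu> \<notin> \<Gamma>' vanish.
  The matrix (d_\<gamma>(\<nu>)) is unitriangular with respect to levels. Hence an induction on the level
  turns this condition into (d) and back, and the evaluations e*_\<gamma> are linearly independent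
  on X, which reduces (a) and (c) to it. Conversely (b) follows by solving
  e*_\<eta> = d*_\<eta> + \<Sum> a_\<eta>\<nu> e*_\<nu> level by level, and (d) and (e) are equivalent because
  d*_\<eta>(d_\<gamma>) = 0 for \<gamma> \<noteq> \<eta>.
\<close>

lemma inj_ecoord: "inj ecoord"
proof (rule injI)
  fix a b :: 'g
  assume "ecoord a = ecoord b"
  then have "ecoord a (unit_vec a) = ecoord b (unit_vec a)" by simp
  then show "a = b" by (simp add: ecoord_def unit_vec_def split: if_splits)
qed

lemma fspan_superset: "f \<in> F \<Longrightarrow> f \<in> fspan X F"
  unfolding fspan_def by (intro CollectI exI[of _ "{f}"] exI[of _ "\<lambda>_. 1"]) auto

lemma fspan_cong: "\<phi> \<in> fspan X F \<Longrightarrow> (\<And>x. x \<in> X \<Longrightarrow> \<psi> x = \<phi> x) \<Longrightarrow> \<psi> \<in> fspan X F"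
  unfolding fspan_def by auto

lemma fspan_mono: "F \<subseteq> G \<Longrightarrow> fspan X F \<subseteq> fspan X G"
  unfolding fspan_def by blast

lemma fspan_zero: "(\<lambda>x. 0) \<in> fspan X F"
  unfolding fspan_def by (intro CollectI exI[of _ "{}"]) auto

lemma fspan_lincomb:
  assumes "\<phi> \<in> fspan X F" "\<psi> \<in> fspan X F"
  shows "(\<lambda>x. a * \<phi> x + b * \<psi> x) \<in> fspan X F"
proof -
  obtain S1 c1 where S1: "finite S1" "S1 \<subseteq> F" "\<forall>x\<in>X. \<phi> x = (\<Sum>f\<in>S1. c1 f * f x)"
    using assms(1) unfolding fspan_def by blast
  obtain S2 c2 where S2: "finite S2" "S2 \<subseteq> F" "\<forall>x\<in>X. \<psi> x = (\<Sum>f\<in>S2. c2 f * f x)"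
    using assms(2) unfolding fspan_def by blast
  let ?c = "\<lambda>f. a * (if f \<in> S1 then c1 f else 0) + b * (if f \<in> S2 then c2 f else 0)"
  have "a * \<phi> x + b * \<psi> x = (\<Sum>f\<in>S1 \<union> S2. ?c f * f x)" if "x \<in> X" for x
  proof -
    have "?c f * f x = a * (if f \<in> S1 then c1 f * f x else 0) + b * (if f \<in> S2 then c2 f * f x else 0)" for f
      by (simp add: algebra_simps)
    then have "(\<Sum>f\<in>S1 \<union> S2. ?c f * f x) = a * (\<Sum>f\<in>S1 \<union> S2. if f \<in> S1 then c1 f * f x else 0)
        + b * (\<Sum>f\<in>S1 \<union> S2. if f \<in> S2 then c2 f * f x else 0)"
      by (simp only: sum.distrib sum_distrib_left)
    also have "\<dots> = a * \<phi> x + b * \<psi> x"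
      using S1 S2 that sum.inter_restrict[of "S1 \<union> S2" "\<lambda>f. c1 f * f x" S1]
        sum.inter_restrict[of "S1 \<union> S2" "\<lambda>f. c2 f * f x" S2] by (simp add: Int_absorb1)
    finally show ?thesis by simp
  qed
  then show ?thesis
    unfolding fspan_def using S1 S2 by (intro CollectI exI[of _ "S1 \<union> S2"] exI[of _ ?c]) auto
qed

lemma fspan_add: "\<phi> \<in> fspan X F \<Longrightarrow> \<psi> \<in> fspan X F \<Longrightarrow> (\<lambda>x. \<phi> x + \<psi> x) \<in> fspan X F"
  using fspan_lincomb[of \<phi> X F \<psi> 1 1] by simp

lemma fspan_diff: "\<phi> \<in> fspan X F \<Longrightarrow> \<psi> \<in> fspan X F \<Longrightarrow> (\<lambda>x. \<phi> x - \<psi> x) \<in> fspan X F"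
  using fspan_lincomb[of \<phi> X F \<psi> 1 "-1"] by simp

lemma fspan_sum:
  assumes "finite T" "\<And>j. j \<in> T \<Longrightarrow> \<phi> j \<in> fspan X F"
  shows "(\<lambda>x. \<Sum>j\<in>T. a j * \<phi> j x) \<in> fspan X F"
  using assms
proof (induction T rule: finite_induct)
  case empty
  then show ?case by (simp add: fspan_zero)
next
  case (insert t T)
  then have "(\<lambda>x. a t * \<phi> t x + 1 * (\<Sum>j\<in>T. a j * \<phi> j x)) \<in> fspan X F"
    by (intro fspan_lincomb) auto
  then show ?case using insert by simp
qed

lemma fspan_subset_fspan:
  assumes "F \<subseteq> fspan X G"
  shows "fspan X F \<subseteq> fspan X G"
proof
  fix \<phi> assume "\<phi> \<in> fspan X F"
  then obtain S c where S: "finite S" "S \<subseteq> F" "\<forall>x\<in>X. \<phi> x = (\<Sum>f\<in>S. c f * f x)"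
    unfolding fspan_def by blast
  have "(\<lambda>x. \<Sum>f\<in>S. c f * f x) \<in> fspan X G"
    using S assms by (intro fspan_sum) auto
  then show "\<phi> \<in> fspan X G" by (rule fspan_cong) (simp add: S(3))
qed

lemma fspan_vanishing:
  assumes "\<phi> \<in> fspan X F" "x \<in> X" "\<And>f. f \<in> F \<Longrightarrow> f x = 0"
  shows "\<phi> x = 0"
proof -
  obtain S c where "S \<subseteq> F" "\<forall>x\<in>X. \<phi> x = (\<Sum>f\<in>S. c f * f x)"
    using assms(1) unfolding fspan_def by blast
  then show ?thesis using assms(2,3) by (auto intro!: sum.neutral)
qed

lemma fspan_ecoord_imageE:
  assumes "\<phi> \<in> fspan X (ecoord ` G)"
  obtains T k where "finite T" "T \<subseteq> G" "\<forall>x\<in>X. \<phi> x = (\<Sum>z\<in>T. k z * x z)"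
proof -
  obtain S c where S: "finite S" "S \<subseteq> ecoord ` G" "\<forall>x\<in>X. \<phi> x = (\<Sum>f\<in>S. c f * f x)"
    using assms unfolding fspan_def by blast
  obtain T where T: "T \<subseteq> G" "finite T" "S = ecoord ` T"
    using finite_subset_image[OF S(1,2)] by (elim exE conjE) (rule that)
  have "inj_on ecoord T" using inj_ecoord by (rule inj_on_subset) simp
  then have "(\<Sum>f\<in>S. c f * f x) = (\<Sum>z\<in>T. c (ecoord z) * x z)" for x
    unfolding T(3) by (rule sum.reindex_cong) (simp_all add: ecoord_def)
  then show ?thesis using S(3) T(1,2) by (intro that[of T "\<lambda>z. c (ecoord z)"]) auto
qed

lemma supp_in_unit_vec: "\<nu> \<in> A \<Longrightarrow> supp_in A (unit_vec \<nu>)"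
  unfolding supp_in_def unit_vec_def by auto

lemma supp_in_restr: "supp_in A (restr A x)"
  unfolding supp_in_def restr_def by auto

lemma restr_eq_sum_unit_vec: "finite A \<Longrightarrow> restr A x = (\<lambda>\<gamma>. \<Sum>\<nu>\<in>A. x \<nu> * unit_vec \<nu> \<gamma>)"
  unfolding restr_def unit_vec_def by (auto simp: if_distrib cong: if_cong)

locale bourgain_delbaen =
  fixes Gamma :: "nat \<Rightarrow> 'g set" and i :: "nat \<Rightarrow> ('g \<Rightarrow> real) \<Rightarrow> ('g \<Rightarrow> real)"
  assumes BD_system: "BD_system Gamma i"
begin

abbreviation \<Gamma> :: "'g set" where "\<Gamma> \<equiv> BD_Gamma Gamma"
abbreviation lev :: "'g \<Rightarrow> nat" where "lev \<equiv> level Gamma"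
abbreviation dv :: "'g \<Rightarrow> 'g \<Rightarrow> real" where "dv \<equiv> dvec Gamma i"
abbreviation ds :: "'g \<Rightarrow> ('g \<Rightarrow> real) \<Rightarrow> real" where "ds \<equiv> dstar Gamma i"
abbreviation cs :: "'g \<Rightarrow> ('g \<Rightarrow> real) \<Rightarrow> real" where "cs \<equiv> cstar Gamma i"
abbreviation X :: "('g \<Rightarrow> real) set" where "X \<equiv> BD_X Gamma i"

lemma finite_Gamma: "1 \<le> q \<Longrightarrow> finite (Gamma q)"
  using BD_system unfolding BD_system_def by blast

lemma Gamma_subset_Suc: "1 \<le> q \<Longrightarrow> Gamma q \<subseteq> Gamma (Suc q)"
  using BD_system unfolding BD_system_def by blast

lemma extension_linear:
  "1 \<le> q \<Longrightarrow> supp_in (Gamma q) x \<Longrightarrow> supp_in (Gamma q) y \<Longrightarrow>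
    i q (\<lambda>\<gamma>. a * x \<gamma> + b * y \<gamma>) = (\<lambda>\<gamma>. a * i q x \<gamma> + b * i q y \<gamma>)"
  using BD_system unfolding BD_system_def by blast

lemma extension_extends: "1 \<le> q \<Longrightarrow> supp_in (Gamma q) x \<Longrightarrow> \<gamma> \<in> Gamma q \<Longrightarrow> i q x \<gamma> = x \<gamma>"
  using BD_system unfolding BD_system_def by blast

lemma extension_compatible:
  "1 \<le> p \<Longrightarrow> p < q \<Longrightarrow> supp_in (Gamma p) x \<Longrightarrow> i p x = i q (restr (Gamma q) (i p x))"
  using BD_system unfolding BD_system_def by blast

lemma Gamma_mono:
  assumes "1 \<le> p" "p \<le> q"
  shows "Gamma p \<subseteq> Gamma q"
  using assms(2)
proof (induction q rule: dec_induct)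
  case (step n)
  then show ?case using Gamma_subset_Suc[of n] assms(1) by auto
qed simp

lemma mem_BD_GammaI: "1 \<le> p \<Longrightarrow> \<gamma> \<in> Gamma p \<Longrightarrow> \<gamma> \<in> \<Gamma>"
  unfolding BD_Gamma_def by auto

lemma
  assumes "\<gamma> \<in> \<Gamma>"
  shows level_ge_1: "1 \<le> lev \<gamma>" and mem_Gamma_level: "\<gamma> \<in> Gamma (lev \<gamma>)"
proof -
  obtain q where "1 \<le> q" "\<gamma> \<in> Gamma q" using assms unfolding BD_Gamma_def by auto
  then have "1 \<le> lev \<gamma> \<and> \<gamma> \<in> Gamma (lev \<gamma>)"
    unfolding level_def by (rule LeastI[where P = "\<lambda>q. 1 \<le> q \<and> \<gamma> \<in> Gamma q", OF conjI])
  then show "1 \<le> lev \<gamma>" "\<gamma> \<in> Gamma (lev \<gamma>)" by auto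
qed

lemma level_le: "1 \<le> p \<Longrightarrow> \<gamma> \<in> Gamma p \<Longrightarrow> lev \<gamma> \<le> p"
  unfolding level_def by (rule Least_le) simp

lemma mem_Gamma_iff_level_le: "\<gamma> \<in> \<Gamma> \<Longrightarrow> 1 \<le> p \<Longrightarrow> \<gamma> \<in> Gamma p \<longleftrightarrow> lev \<gamma> \<le> p"
  using level_le level_ge_1 mem_Gamma_level Gamma_mono by blast

lemma extension_zero: "1 \<le> q \<Longrightarrow> i q (\<lambda>_. 0) = (\<lambda>_. 0)"
  using extension_linear[of q "\<lambda>_. 0" "\<lambda>_. 0" 0 0] by (simp add: supp_in_def)

lemma extension_sum_unit_vec:
  assumes "1 \<le> q" "finite T" "T \<subseteq> Gamma q"
  shows "i q (\<lambda>\<gamma>. \<Sum>\<nu>\<in>T. k \<nu> * unit_vec \<nu> \<gamma>) = (\<lambda>\<gamma>. \<Sum>\<nu>\<in>T. k \<nu> * i q (unit_vec \<nu>) \<gamma>)"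
  using assms(2,3)
proof (induction T rule: finite_induct)
  case empty
  then show ?case using extension_zero[OF assms(1)] by simp
next
  case (insert t T)
  have "supp_in (Gamma q) (\<lambda>\<gamma>. \<Sum>\<nu>\<in>T. k \<nu> * unit_vec \<nu> \<gamma>)"
    using insert by (auto simp: supp_in_def unit_vec_def intro!: sum.neutral)
  then have "i q (\<lambda>\<gamma>. k t * unit_vec t \<gamma> + 1 * (\<Sum>\<nu>\<in>T. k \<nu> * unit_vec \<nu> \<gamma>))
     = (\<lambda>\<gamma>. k t * i q (unit_vec t) \<gamma> + 1 * i q (\<lambda>\<gamma>. \<Sum>\<nu>\<in>T. k \<nu> * unit_vec \<nu> \<gamma>) \<gamma>)"
    using insert by (intro extension_linear[OF assms(1)]) (auto intro: supp_in_unit_vec)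
  then show ?case using insert by simp
qed

lemma Pinit_eq_sum: "1 \<le> q \<Longrightarrow> Pinit Gamma i q x \<eta> = (\<Sum>\<nu>\<in>Gamma q. x \<nu> * i q (unit_vec \<nu>) \<eta>)"
  unfolding Pinit_def
  using restr_eq_sum_unit_vec[OF finite_Gamma, of q x] extension_sum_unit_vec[OF _ finite_Gamma order_refl, of q x]
  by simp

lemma Pinit_eq_self: "1 \<le> q \<Longrightarrow> \<eta> \<in> Gamma q \<Longrightarrow> Pinit Gamma i q x \<eta> = x \<eta>"
  unfolding Pinit_def using extension_extends[OF _ supp_in_restr] by (simp add: restr_def)

lemma Pint_atLeast_1: "Pint Gamma i {1..} x = x"
  using infinite_Ici[where a = "1::nat"] by (simp add: Pint_def Pinit_def cInf_atLeast)

definition Gamma_below :: "'g \<Rightarrow> 'g set" where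
  "Gamma_below \<eta> = (if lev \<eta> \<le> 1 then {} else Gamma (lev \<eta> - 1))"

definition cstar_coeff :: "'g \<Rightarrow> 'g \<Rightarrow> real" where
  "cstar_coeff \<eta> \<nu> = i (lev \<eta> - 1) (unit_vec \<nu>) \<eta>"

lemma finite_Gamma_below: "finite (Gamma_below \<eta>)"
  unfolding Gamma_below_def using finite_Gamma by auto

lemma mem_Gamma_below_iff: "\<nu> \<in> Gamma_below \<eta> \<longleftrightarrow> \<nu> \<in> \<Gamma> \<and> lev \<nu> < lev \<eta>"
proof (cases "lev \<eta> \<le> 1")
  case True
  then show ?thesis using level_ge_1[of \<nu>] by (auto simp: Gamma_below_def)
next
  case False
  then have q: "1 \<le> lev \<eta> - 1" by simp
  have "\<nu> \<in> Gamma (lev \<eta> - 1) \<longleftrightarrow> \<nu> \<in> \<Gamma> \<and> lev \<nu> \<le> lev \<eta> - 1"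
    using mem_BD_GammaI[OF q] mem_Gamma_iff_level_le[OF _ q] by blast
  then show ?thesis using False by (auto simp: Gamma_below_def)
qed

lemma Gamma_below_subset: "\<eta> \<in> \<Gamma> \<Longrightarrow> 1 \<le> q \<Longrightarrow> \<eta> \<in> Gamma q \<Longrightarrow> Gamma_below \<eta> \<subseteq> Gamma q"
  using mem_Gamma_below_iff mem_Gamma_iff_level_le by fastforce

lemma cstar_eq_Pinit: "\<eta> \<in> \<Gamma> \<Longrightarrow> cs \<eta> x = Pinit Gamma i (lev \<eta> - 1) x \<eta>"
  unfolding cstar_def dstar_def Pint_def
  using Pinit_eq_self[OF level_ge_1 mem_Gamma_level, of \<eta> x] by (simp add: ecoord_def)

lemma cstar_eq_sum: "\<eta> \<in> \<Gamma> \<Longrightarrow> cs \<eta> x = (\<Sum>\<nu>\<in>Gamma_below \<eta>. cstar_coeff \<eta> \<nu> * x \<nu>)"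
  unfolding cstar_eq_Pinit Gamma_below_def cstar_coeff_def
  by (cases "lev \<eta> \<le> 1") (auto simp: Pinit_def[of _ _ 0] Pinit_eq_sum mult.commute)

lemma dstar_eq_sum: "\<eta> \<in> \<Gamma> \<Longrightarrow> ds \<eta> x = x \<eta> - (\<Sum>\<nu>\<in>Gamma_below \<eta>. cstar_coeff \<eta> \<nu> * x \<nu>)"
  using cstar_eq_sum[of \<eta> x] unfolding cstar_def ecoord_def by simp

lemma dvec_eq_unit_vec: "\<gamma> \<in> \<Gamma> \<Longrightarrow> \<eta> \<in> Gamma (lev \<gamma>) \<Longrightarrow> dv \<gamma> \<eta> = unit_vec \<gamma> \<eta>"
  unfolding dvec_def using extension_extends[OF level_ge_1 supp_in_unit_vec[OF mem_Gamma_level]] by simp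

lemma dvec_self: "\<gamma> \<in> \<Gamma> \<Longrightarrow> dv \<gamma> \<gamma> = 1"
  using dvec_eq_unit_vec[OF _ mem_Gamma_level] by (simp add: unit_vec_def)

lemma dvec_eq_0: "\<gamma> \<in> \<Gamma> \<Longrightarrow> \<eta> \<in> \<Gamma> \<Longrightarrow> \<eta> \<noteq> \<gamma> \<Longrightarrow> lev \<eta> \<le> lev \<gamma> \<Longrightarrow> dv \<gamma> \<eta> = 0"
  using dvec_eq_unit_vec[of \<gamma> \<eta>] mem_Gamma_iff_level_le[of \<eta> "lev \<gamma>"] level_ge_1[of \<gamma>]
  by (simp add: unit_vec_def)

lemma dvec_in_X: "\<gamma> \<in> \<Gamma> \<Longrightarrow> dv \<gamma> \<in> X"
  unfolding BD_X_def by (auto intro!: exI[of _ "{\<gamma>}"] exI[of _ "\<lambda>_. 1"])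

lemma Pinit_dvec:
  assumes \<gamma>: "\<gamma> \<in> \<Gamma>"
  shows "Pinit Gamma i p (dv \<gamma>) = (if lev \<gamma> \<le> p then dv \<gamma> else (\<lambda>_. 0))"
proof (cases "p = 0")
  case True
  then show ?thesis using level_ge_1[OF \<gamma>] by (simp add: Pinit_def)
next
  case False
  have p: "1 \<le> p" using False by simp
  note l1 = level_ge_1[OF \<gamma>] and lg = mem_Gamma_level[OF \<gamma>]
  consider "lev \<gamma> = p" | "lev \<gamma> < p" | "p < lev \<gamma>" by linarith
  then show ?thesis
  proof cases
    case 1
    have "restr (Gamma p) (dv \<gamma>) = unit_vec \<gamma>"
      using dvec_eq_unit_vec[OF \<gamma>] 1 lg by (auto simp: restr_def unit_vec_def)
    then show ?thesis using 1 False by (simp add: Pinit_def dvec_def)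
  next
    case 2
    then show ?thesis
      using extension_compatible[OF l1 2 supp_in_unit_vec[OF lg]] False by (simp add: Pinit_def dvec_def)
  next
    case 3
    have "\<gamma> \<notin> Gamma p" using mem_Gamma_iff_level_le[OF \<gamma> p] 3 by simp
    moreover have "Gamma p \<subseteq> Gamma (lev \<gamma>)" using Gamma_mono[OF p] 3 by simp
    ultimately have "dv \<gamma> \<eta> = 0" if "\<eta> \<in> Gamma p" for \<eta>
      using dvec_eq_unit_vec[OF \<gamma>] that by (auto simp: unit_vec_def)
    then have "restr (Gamma p) (dv \<gamma>) = (\<lambda>_. 0)" by (auto simp: restr_def)
    then show ?thesis using 3 False extension_zero[OF p] by (simp add: Pinit_def)
  qed
qed

lemma Pint_dvec_proportional:
  assumes "\<gamma> \<in> \<Gamma>"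
  shows "\<exists>k. Pint Gamma i E (dv \<gamma>) = (\<lambda>\<eta>. k * dv \<gamma> \<eta>)"
proof (cases "finite E")
  case True
  let ?ind = "\<lambda>q. if lev \<gamma> \<le> q then 1 else 0 :: real"
  have "Pint Gamma i E (dv \<gamma>) = (\<lambda>\<eta>. \<Sum>q\<in>E. (?ind q - ?ind (q - 1)) * dv \<gamma> \<eta>)"
    using True by (auto simp: Pint_def Pinit_dvec[OF assms] intro!: sum.cong)
  then show ?thesis by (auto simp: sum_distrib_right[symmetric])
qed (auto simp: Pint_def Pinit_dvec[OF assms] intro: exI[of _ 0] exI[of _ 1])

lemma dstar_dvec: "\<gamma> \<in> \<Gamma> \<Longrightarrow> \<eta> \<in> \<Gamma> \<Longrightarrow> \<gamma> \<noteq> \<eta> \<Longrightarrow> ds \<eta> (dv \<gamma>) = 0"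
  unfolding dstar_def Pint_def using dvec_eq_0[of \<gamma> \<eta>] by (auto simp: Pinit_dvec)

lemma cstar_dvec: "\<gamma> \<in> \<Gamma> \<Longrightarrow> \<eta> \<in> \<Gamma> \<Longrightarrow> \<gamma> \<noteq> \<eta> \<Longrightarrow> cs \<eta> (dv \<gamma>) = dv \<gamma> \<eta>"
  unfolding cstar_def using dstar_dvec by (simp add: ecoord_def)

lemma fspan_Pint_coords_vanish_at_dvec:
  assumes "\<phi> \<in> fspan X {(\<lambda>x. ecoord \<zeta> (Pint Gamma i E x)) | \<zeta> E. \<zeta> \<in> A \<and> nat_interval E}"
    and "\<gamma> \<in> \<Gamma>" "\<And>\<zeta>. \<zeta> \<in> A \<Longrightarrow> dv \<gamma> \<zeta> = 0"
  shows "\<phi> (dv \<gamma>) = 0"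
proof (rule fspan_vanishing[OF assms(1) dvec_in_X[OF assms(2)]])
  fix f assume "f \<in> {(\<lambda>x. ecoord \<zeta> (Pint Gamma i E x)) | \<zeta> E. \<zeta> \<in> A \<and> nat_interval E}"
  then obtain \<zeta> E where "\<zeta> \<in> A" "f = (\<lambda>x. ecoord \<zeta> (Pint Gamma i E x))" by blast
  then show "f (dv \<gamma>) = 0"
    using Pint_dvec_proportional[OF assms(2), of E] assms(3) by (auto simp: ecoord_def)
qed

lemma mem_Delta_Suc_iff: "1 \<le> q \<Longrightarrow> \<eta> \<in> Delta Gamma (Suc q) \<longleftrightarrow> \<eta> \<in> \<Gamma> \<and> lev \<eta> = Suc q"
  using mem_BD_GammaI[of "Suc q" \<eta>] mem_Gamma_iff_level_le[of \<eta> q] mem_Gamma_iff_level_le[of \<eta> "Suc q"]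
  by (auto simp: Delta_def)

text \<open>Unitriangularity: d_g vanishes at every other point of level \<le> lev g, so testing on d_g
  for a nonzero coefficient c g of maximal level isolates c g.\<close>
lemma dvec_triangular:
  assumes "finite S" "S \<subseteq> \<Gamma>" "\<And>\<gamma>. \<gamma> \<in> S \<Longrightarrow> (\<Sum>z\<in>S. c z * dv \<gamma> z) = 0" "z \<in> S"
  shows "c z = 0"
proof (rule ccontr)
  let ?T = "{y \<in> S. c y \<noteq> 0}"
  assume "c z \<noteq> 0"
  then have T: "finite ?T" "?T \<noteq> {}" using assms(1,4) by auto
  obtain g where g: "g \<in> ?T" and lev_g: "Max (lev ` ?T) = lev g" using obtains_MAX[OF T] .
  have g_max: "lev y \<le> lev g" if "y \<in> ?T" for y
    using Max_ge[OF finite_imageI[OF T(1)] imageI[OF that, of lev]] lev_g by simp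
  have "(\<Sum>y\<in>S - {g}. c y * dv g y) = 0"
  proof (rule sum.neutral, rule ballI)
    fix y assume "y \<in> S - {g}"
    then show "c y * dv g y = 0"
      using g g_max[of y] dvec_eq_0[of g y] assms(2) by (cases "c y = 0") auto
  qed
  then have "(\<Sum>y\<in>S. c y * dv g y) = c g * dv g g"
    using sum.remove[OF assms(1), of g "\<lambda>y. c y * dv g y"] g by simp
  also have "\<dots> = c g" using dvec_self g assms(2) by auto
  finally show False using assms(3) g by simp
qed

lemma coeff_eq_0_if_ecoord_sums_agree_on_X:
  assumes "finite S" "S \<subseteq> \<Gamma>" "finite T" "T \<subseteq> \<Gamma>" "S \<inter> T = {}"
    and "\<forall>x\<in>X. (\<Sum>z\<in>S. c z * x z) = (\<Sum>z\<in>T. k z * x z)" and "z \<in> S"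
  shows "c z = 0"
proof -
  let ?m = "\<lambda>z. if z \<in> S then c z else - k z"
  have "?m z = 0"
  proof (rule dvec_triangular[of "S \<union> T"])
    fix \<gamma> assume "\<gamma> \<in> S \<union> T"
    then have "dv \<gamma> \<in> X" using assms(2,4) dvec_in_X by blast
    moreover have "(\<Sum>z\<in>S \<union> T. ?m z * dv \<gamma> z) = (\<Sum>z\<in>S. c z * dv \<gamma> z) - (\<Sum>z\<in>T. k z * dv \<gamma> z)"
    proof -
      have "(\<Sum>z\<in>T. ?m z * dv \<gamma> z) = (\<Sum>z\<in>T. - (k z * dv \<gamma> z))"
        using assms(5) by (intro sum.cong) auto
      then show ?thesis using assms(1,3,5) by (simp add: sum.union_disjoint sum_negf)
    qed
    ultimately show "(\<Sum>z\<in>S \<union> T. ?m z * dv \<gamma> z) = 0" using assms(6) by simp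
  qed (use assms in auto)
  then show ?thesis using assms(7) by simp
qed

end

locale bourgain_delbaen_subset = bourgain_delbaen Gamma i
    for Gamma :: "nat \<Rightarrow> 'g set" and i :: "nat \<Rightarrow> ('g \<Rightarrow> real) \<Rightarrow> ('g \<Rightarrow> real)" +
  fixes G' :: "'g set"
  assumes G'_subset: "G' \<subseteq> \<Gamma>"
begin

definition cstar_supported :: "'g \<Rightarrow> bool" where
  "cstar_supported \<eta> \<longleftrightarrow> (\<forall>\<nu>\<in>Gamma_below \<eta> - G'. cstar_coeff \<eta> \<nu> = 0)"

definition outer_dvecs_vanish_at :: "'g \<Rightarrow> bool" where
  "outer_dvecs_vanish_at \<eta> \<longleftrightarrow> (\<forall>\<gamma>\<in>\<Gamma> - G'. dv \<gamma> \<eta> = 0)"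

lemma cstar_eq_sum_supported:
  assumes "\<eta> \<in> \<Gamma>" "cstar_supported \<eta>"
  shows "cs \<eta> x = (\<Sum>\<nu>\<in>Gamma_below \<eta> \<inter> G'. cstar_coeff \<eta> \<nu> * x \<nu>)"
proof -
  have "(\<Sum>\<nu>\<in>Gamma_below \<eta>. cstar_coeff \<eta> \<nu> * x \<nu>) = (\<Sum>\<nu>\<in>Gamma_below \<eta> \<inter> G'. cstar_coeff \<eta> \<nu> * x \<nu>)"
    using assms(2) unfolding cstar_supported_def
    by (intro sum.mono_neutral_right[OF finite_Gamma_below]) auto
  then show ?thesis using cstar_eq_sum[OF assms(1)] by simp
qed

lemma cstar_supported_if_dstar_in_fspan:
  assumes "\<eta> \<in> G'" "ds \<eta> \<in> fspan X (ecoord ` G')"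
  shows "cstar_supported \<eta>"
  unfolding cstar_supported_def
proof
  fix \<nu> assume \<nu>: "\<nu> \<in> Gamma_below \<eta> - G'"
  let ?B = "Gamma_below \<eta>" and ?a = "cstar_coeff \<eta>"
  have \<eta>: "\<eta> \<in> \<Gamma>" using assms(1) G'_subset by auto
  have "ecoord \<eta> \<in> fspan X (ecoord ` G')" using assms(1) by (intro fspan_superset) simp
  moreover have "(\<lambda>x. \<Sum>\<nu>\<in>?B \<inter> G'. ?a \<nu> * ecoord \<nu> x) \<in> fspan X (ecoord ` G')"
    using finite_Gamma_below by (intro fspan_sum) (auto intro: fspan_superset)
  ultimately have "(\<lambda>x. ecoord \<eta> x - ds \<eta> x - (\<Sum>\<nu>\<in>?B \<inter> G'. ?a \<nu> * ecoord \<nu> x)) \<in> fspan X (ecoord ` G')"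
    using assms(2) by (intro fspan_diff)
  then have "(\<lambda>x. \<Sum>\<nu>\<in>?B - G'. ?a \<nu> * x \<nu>) \<in> fspan X (ecoord ` G')"
    by (rule fspan_cong)
      (simp add: dstar_eq_sum[OF \<eta>] ecoord_def sum.Int_Diff[OF finite_Gamma_below, of _ _ G'])
  then obtain T k where "finite T" "T \<subseteq> G'" "\<forall>x\<in>X. (\<Sum>\<nu>\<in>?B - G'. ?a \<nu> * x \<nu>) = (\<Sum>z\<in>T. k z * x z)"
    by (rule fspan_ecoord_imageE)
  then show "?a \<nu> = 0"
    using coeff_eq_0_if_ecoord_sums_agree_on_X[of "?B - G'" T] \<nu> G'_subset finite_Gamma_below mem_Gamma_below_iff
    by blast
qed

lemma outer_dvecs_vanish_at_if_cstar_supported: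
  assumes "\<eta> \<in> G'" "cstar_supported \<eta>"
    and lower: "\<And>\<eta>'. \<eta>' \<in> G' \<Longrightarrow> lev \<eta>' < lev \<eta> \<Longrightarrow> outer_dvecs_vanish_at \<eta>'"
  shows "outer_dvecs_vanish_at \<eta>"
  unfolding outer_dvecs_vanish_at_def
proof
  fix \<gamma> assume \<gamma>: "\<gamma> \<in> \<Gamma> - G'"
  have \<eta>: "\<eta> \<in> \<Gamma>" using assms(1) G'_subset by auto
  have "\<gamma> \<noteq> \<eta>" using \<gamma> assms(1) by auto
  then have "dv \<gamma> \<eta> = cs \<eta> (dv \<gamma>)" using cstar_dvec[of \<gamma> \<eta>] \<gamma> \<eta> by simp
  also have "\<dots> = (\<Sum>\<nu>\<in>Gamma_below \<eta>. cstar_coeff \<eta> \<nu> * dv \<gamma> \<nu>)" by (rule cstar_eq_sum[OF \<eta>])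
  also have "\<dots> = 0"
  proof (rule sum.neutral, rule ballI)
    fix \<nu> assume "\<nu> \<in> Gamma_below \<eta>"
    then show "cstar_coeff \<eta> \<nu> * dv \<gamma> \<nu> = 0"
      using assms(2) lower[of \<nu>] \<gamma> mem_Gamma_below_iff
      unfolding cstar_supported_def outer_dvecs_vanish_at_def by (cases "\<nu> \<in> G'") auto
  qed
  finally show "dv \<gamma> \<eta> = 0" .
qed

lemma cstar_supported_if_cstar_dvec_eq_0:
  assumes "\<eta> \<in> G'"
    and lower: "\<And>\<eta>'. \<eta>' \<in> G' \<Longrightarrow> lev \<eta>' < lev \<eta> \<Longrightarrow> outer_dvecs_vanish_at \<eta>'"
    and cstar_dvec_0: "\<And>\<gamma>. \<gamma> \<in> Gamma_below \<eta> - G' \<Longrightarrow> cs \<eta> (dv \<gamma>) = 0"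
  shows "cstar_supported \<eta>"
  unfolding cstar_supported_def
proof
  fix \<nu> assume \<nu>: "\<nu> \<in> Gamma_below \<eta> - G'"
  have \<eta>: "\<eta> \<in> \<Gamma>" using assms(1) G'_subset by auto
  let ?S = "Gamma_below \<eta> - G'" and ?a = "cstar_coeff \<eta>"
  show "?a \<nu> = 0"
  proof (rule dvec_triangular[of ?S])
    fix \<gamma> assume \<gamma>: "\<gamma> \<in> ?S"
    have "(\<Sum>z\<in>?S. ?a z * dv \<gamma> z) = (\<Sum>z\<in>Gamma_below \<eta>. ?a z * dv \<gamma> z)"
      using \<gamma> lower mem_Gamma_below_iff unfolding outer_dvecs_vanish_at_def
      by (intro sum.mono_neutral_left[OF finite_Gamma_below]) auto
    also have "\<dots> = cs \<eta> (dv \<gamma>)" using cstar_eq_sum[OF \<eta>] by simp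
    also have "\<dots> = 0" using cstar_dvec_0 \<gamma> by simp
    finally show "(\<Sum>z\<in>?S. ?a z * dv \<gamma> z) = 0" .
  qed (use \<nu> finite_Gamma_below mem_Gamma_below_iff in auto)
qed

lemma cstar_supported_iff_outer_dvecs_vanish:
  "(\<forall>\<eta>\<in>G'. cstar_supported \<eta>) \<longleftrightarrow> (\<forall>\<eta>\<in>G'. outer_dvecs_vanish_at \<eta>)"
proof safe
  fix \<eta> assume supported: "\<forall>\<eta>\<in>G'. cstar_supported \<eta>" and "\<eta> \<in> G'"
  then show "outer_dvecs_vanish_at \<eta>"
  proof (induction \<eta> rule: measure_induct_rule[where f = lev])
    case (less \<eta>)
    then show ?case using outer_dvecs_vanish_at_if_cstar_supported by blast
  qed
next
  fix \<eta> assume vanish: "\<forall>\<eta>\<in>G'. outer_dvecs_vanish_at \<eta>" and \<eta>: "\<eta> \<in> G'"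
  show "cstar_supported \<eta>"
  proof (rule cstar_supported_if_cstar_dvec_eq_0[OF \<eta>])
    fix \<gamma> assume "\<gamma> \<in> Gamma_below \<eta> - G'"
    then show "cs \<eta> (dv \<gamma>) = 0"
      using cstar_dvec[of \<gamma> \<eta>] vanish \<eta> G'_subset mem_Gamma_below_iff
      unfolding outer_dvecs_vanish_at_def by auto
  qed (use vanish in blast)
qed

lemma
  assumes "G' \<noteq> {}"
  shows Least_meeting_index_ge_1: "1 \<le> (LEAST q. 1 \<le> q \<and> G' \<inter> Gamma q \<noteq> {})"
    and Least_meeting_index_le_level: "\<eta> \<in> G' \<Longrightarrow> (LEAST q. 1 \<le> q \<and> G' \<inter> Gamma q \<noteq> {}) \<le> lev \<eta>"
proof -
  obtain \<eta>0 where "\<eta>0 \<in> G'" using assms by blast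
  then have "1 \<le> lev \<eta>0 \<and> G' \<inter> Gamma (lev \<eta>0) \<noteq> {}"
    using G'_subset level_ge_1 mem_Gamma_level by blast
  then show "1 \<le> (LEAST q. 1 \<le> q \<and> G' \<inter> Gamma q \<noteq> {})" by (rule LeastI2_ex[OF exI]) simp
  show "(LEAST q. 1 \<le> q \<and> G' \<inter> Gamma q \<noteq> {}) \<le> lev \<eta>" if "\<eta> \<in> G'"
    using that G'_subset level_ge_1 mem_Gamma_level by (intro Least_le) blast
qed

lemma cstar_supported_if_self_determined:
  "self_determined Gamma i G' \<Longrightarrow> \<forall>\<eta>\<in>G'. cstar_supported \<eta>"
  unfolding self_determined_def using cstar_supported_if_dstar_in_fspan by blast

lemma dstar_eq_ecoord_diff_sum:
  assumes "\<eta> \<in> G'" "cstar_supported \<eta>"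
  shows "ds \<eta> = (\<lambda>x. ecoord \<eta> x - (\<Sum>\<nu>\<in>Gamma_below \<eta> \<inter> G'. cstar_coeff \<eta> \<nu> * ecoord \<nu> x))"
proof
  fix x
  have "ds \<eta> x = ecoord \<eta> x - cs \<eta> x" by (simp add: cstar_def)
  then show "ds \<eta> x = ecoord \<eta> x - (\<Sum>\<nu>\<in>Gamma_below \<eta> \<inter> G'. cstar_coeff \<eta> \<nu> * ecoord \<nu> x)"
    using assms G'_subset cstar_eq_sum_supported[of \<eta> x] by (auto simp: ecoord_def)
qed

lemma Gamma_below_inter_subset: "\<eta> \<in> G' \<inter> Gamma q \<Longrightarrow> 1 \<le> q \<Longrightarrow> Gamma_below \<eta> \<inter> G' \<subseteq> G' \<inter> Gamma q"
  using Gamma_below_subset[of \<eta> q] G'_subset by auto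

lemma fspan_dstar_subset_fspan_ecoord:
  assumes supported: "\<forall>\<eta>\<in>G'. cstar_supported \<eta>" and "1 \<le> q"
  shows "fspan X (ds ` (G' \<inter> Gamma q)) \<subseteq> fspan X (ecoord ` (G' \<inter> Gamma q))"
proof (rule fspan_subset_fspan, rule image_subsetI)
  fix \<eta> assume \<eta>: "\<eta> \<in> G' \<inter> Gamma q"
  have "ecoord \<eta> \<in> fspan X (ecoord ` (G' \<inter> Gamma q))" using \<eta> by (intro fspan_superset) simp
  moreover have "(\<lambda>x. \<Sum>\<nu>\<in>Gamma_below \<eta> \<inter> G'. cstar_coeff \<eta> \<nu> * ecoord \<nu> x) \<in> fspan X (ecoord ` (G' \<inter> Gamma q))"
    using Gamma_below_inter_subset[OF \<eta> \<open>1 \<le> q\<close>] finite_Gamma_below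
    by (intro fspan_sum fspan_superset) auto
  ultimately show "ds \<eta> \<in> fspan X (ecoord ` (G' \<inter> Gamma q))"
    using \<eta> supported dstar_eq_ecoord_diff_sum by (simp add: fspan_diff)
qed

lemma ecoord_in_fspan_dstar:
  assumes supported: "\<forall>\<eta>\<in>G'. cstar_supported \<eta>" and "1 \<le> q" and "\<eta> \<in> G' \<inter> Gamma q"
  shows "ecoord \<eta> \<in> fspan X (ds ` (G' \<inter> Gamma q))"
  using \<open>\<eta> \<in> G' \<inter> Gamma q\<close>
proof (induction \<eta> rule: measure_induct_rule[where f = lev])
  case (less \<eta>)
  have "ds \<eta> \<in> fspan X (ds ` (G' \<inter> Gamma q))" using less.prems by (intro fspan_superset) simp
  moreover have "(\<lambda>x. \<Sum>\<nu>\<in>Gamma_below \<eta> \<inter> G'. cstar_coeff \<eta> \<nu> * ecoord \<nu> x) \<in> fspan X (ds ` (G' \<inter> Gamma q))"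
    using less.IH Gamma_below_inter_subset[OF less.prems \<open>1 \<le> q\<close>] mem_Gamma_below_iff finite_Gamma_below
    by (intro fspan_sum) auto
  ultimately have "(\<lambda>x. ds \<eta> x + (\<Sum>\<nu>\<in>Gamma_below \<eta> \<inter> G'. cstar_coeff \<eta> \<nu> * ecoord \<nu> x))
      \<in> fspan X (ds ` (G' \<inter> Gamma q))"
    by (rule fspan_add)
  then show ?case using less.prems supported dstar_eq_ecoord_diff_sum by simp
qed

lemma fspan_dstar_eq_fspan_ecoord:
  assumes "\<forall>\<eta>\<in>G'. cstar_supported \<eta>" and "1 \<le> q"
  shows "fspan X (ds ` (G' \<inter> Gamma q)) = fspan X (ecoord ` (G' \<inter> Gamma q))"
  using fspan_dstar_subset_fspan_ecoord[OF assms] ecoord_in_fspan_dstar[OF assms]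
  by (auto intro!: fspan_subset_fspan)

lemma self_determined_if_fspan_dstar_eq:
  assumes "infinite G'"
    and "\<forall>q\<ge>q0. fspan X (ds ` (G' \<inter> Gamma q)) = fspan X (ecoord ` (G' \<inter> Gamma q))"
  shows "self_determined Gamma i G'"
  unfolding self_determined_def
proof (intro conjI ballI assms(1) G'_subset)
  fix \<gamma> assume \<gamma>: "\<gamma> \<in> G'"
  let ?q = "max q0 (lev \<gamma>)"
  have "\<gamma> \<in> Gamma ?q"
    using \<gamma> G'_subset mem_Gamma_level Gamma_mono[OF level_ge_1, of \<gamma> ?q] by auto
  then have "ds \<gamma> \<in> fspan X (ds ` (G' \<inter> Gamma ?q))" using \<gamma> by (intro fspan_superset) simp
  also have "\<dots> = fspan X (ecoord ` (G' \<inter> Gamma ?q))" using assms(2) by simp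
  also have "\<dots> \<subseteq> fspan X (ecoord ` G')" by (intro fspan_mono) auto
  finally show "ds \<gamma> \<in> fspan X (ecoord ` G')" .
qed

lemma fspan_cstar_subset_fspan_Pint_coords:
  assumes supported: "\<forall>\<eta>\<in>G'. cstar_supported \<eta>" and "1 \<le> q"
  shows "fspan X (cs ` (G' \<inter> Delta Gamma (Suc q)))
    \<subseteq> fspan X {(\<lambda>x. ecoord \<gamma> (Pint Gamma i E x)) | \<gamma> E. \<gamma> \<in> G' \<inter> Gamma q \<and> nat_interval E}"
    (is "_ \<subseteq> fspan X ?P")
proof (rule fspan_subset_fspan, rule image_subsetI)
  fix \<eta> assume "\<eta> \<in> G' \<inter> Delta Gamma (Suc q)"
  then have \<eta>: "\<eta> \<in> G'" "\<eta> \<in> \<Gamma>" "lev \<eta> = Suc q" using mem_Delta_Suc_iff[OF \<open>1 \<le> q\<close>] by auto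
  then have "Gamma_below \<eta> = Gamma q" using \<open>1 \<le> q\<close> by (simp add: Gamma_below_def)
  then have "cs \<eta> = (\<lambda>x. \<Sum>\<nu>\<in>Gamma q \<inter> G'. cstar_coeff \<eta> \<nu> * ecoord \<nu> (Pint Gamma i {1..} x))"
    unfolding Pint_atLeast_1 using cstar_eq_sum_supported \<eta> supported by (auto simp: ecoord_def)
  also have "\<dots> \<in> fspan X ?P"
    using finite_Gamma[OF \<open>1 \<le> q\<close>]
    by (intro fspan_sum fspan_superset) (auto simp: nat_interval_def intro!: exI[of _ "{1..}"])
  finally show "cs \<eta> \<in> fspan X ?P" .
qed

lemma outer_dvecs_vanish_if_fspan_conditions:
  assumes "1 \<le> q0" "\<And>\<eta>. \<eta> \<in> G' \<Longrightarrow> q0 \<le> lev \<eta>"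
    and base: "fspan X (ds ` (G' \<inter> Gamma q0)) = fspan X (ecoord ` (G' \<inter> Gamma q0))"
    and step: "\<forall>q\<ge>q0. fspan X (cs ` (G' \<inter> Delta Gamma (Suc q)))
      \<subseteq> fspan X {(\<lambda>x. ecoord \<gamma> (Pint Gamma i E x)) | \<gamma> E. \<gamma> \<in> G' \<inter> Gamma q \<and> nat_interval E}"
    and "\<eta> \<in> G'"
  shows "outer_dvecs_vanish_at \<eta>"
  using \<open>\<eta> \<in> G'\<close>
proof (induction \<eta> rule: measure_induct_rule[where f = lev])
  case (less \<eta>)
  have \<eta>: "\<eta> \<in> \<Gamma>" using less.prems G'_subset by auto
  have lower: "\<And>\<eta>'. \<eta>' \<in> G' \<Longrightarrow> lev \<eta>' < lev \<eta> \<Longrightarrow> outer_dvecs_vanish_at \<eta>'" using less.IH by blast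
  have "cstar_supported \<eta>"
  proof (cases "lev \<eta> = q0")
    case True
    then have "ds \<eta> \<in> fspan X (ds ` (G' \<inter> Gamma q0))"
      using less.prems mem_Gamma_level[OF \<eta>] by (intro fspan_superset) simp
    also have "\<dots> \<subseteq> fspan X (ecoord ` G')" unfolding base by (intro fspan_mono) auto
    finally show ?thesis by (rule cstar_supported_if_dstar_in_fspan[OF less.prems])
  next
    case False
    then obtain q where q: "lev \<eta> = Suc q" "q0 \<le> q"
      using assms(2)[OF less.prems] by (cases "lev \<eta>") auto
    then have "cs \<eta> \<in> fspan X (cs ` (G' \<inter> Delta Gamma (Suc q)))"
      using less.prems \<eta> mem_Delta_Suc_iff[of q \<eta>] assms(1) by (intro fspan_superset) simp
    then have cs_in: "cs \<eta> \<in> fspan X {(\<lambda>x. ecoord \<gamma> (Pint Gamma i E x)) | \<gamma> E. \<gamma> \<in> G' \<inter> Gamma q \<and> nat_interval E}"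
      using step q(2) by blast
    show ?thesis
    proof (rule cstar_supported_if_cstar_dvec_eq_0[OF less.prems lower])
      fix \<gamma> assume \<gamma>: "\<gamma> \<in> Gamma_below \<eta> - G'"
      then have "\<gamma> \<in> \<Gamma>" using mem_Gamma_below_iff by blast
      then show "cs \<eta> (dv \<gamma>) = 0"
      proof (rule fspan_Pint_coords_vanish_at_dvec[OF cs_in])
        fix \<zeta> assume \<zeta>: "\<zeta> \<in> G' \<inter> Gamma q"
        then have "lev \<zeta> < lev \<eta>" using level_le[of q \<zeta>] q assms(1) by simp
        then show "dv \<gamma> \<zeta> = 0" using lower \<zeta> \<gamma> \<open>\<gamma> \<in> \<Gamma>\<close> unfolding outer_dvecs_vanish_at_def by blast
      qed
    qed
  qed
  then show ?case by (rule outer_dvecs_vanish_at_if_cstar_supported[OF less.prems _ lower])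
qed

lemma self_determined_iff_cstar_supported:
  assumes "infinite G'"
  shows "self_determined Gamma i G' \<longleftrightarrow> (\<forall>\<eta>\<in>G'. cstar_supported \<eta>)"
  using cstar_supported_if_self_determined self_determined_if_fspan_dstar_eq[OF assms, of 1]
    fspan_dstar_eq_fspan_ecoord by blast

lemma fspan_dstar_eq_iff_cstar_supported:
  assumes "infinite G'" "1 \<le> q0"
  shows "(\<forall>q\<ge>q0. fspan X (ds ` (G' \<inter> Gamma q)) = fspan X (ecoord ` (G' \<inter> Gamma q)))
    \<longleftrightarrow> (\<forall>\<eta>\<in>G'. cstar_supported \<eta>)"
  using self_determined_if_fspan_dstar_eq[OF assms(1)] cstar_supported_if_self_determined
    fspan_dstar_eq_fspan_ecoord assms(2) by auto

lemma fspan_conditions_iff_cstar_supported: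
  assumes "1 \<le> q0" "\<And>\<eta>. \<eta> \<in> G' \<Longrightarrow> q0 \<le> lev \<eta>"
  shows "(fspan X (ds ` (G' \<inter> Gamma q0)) = fspan X (ecoord ` (G' \<inter> Gamma q0))
      \<and> (\<forall>q\<ge>q0. fspan X (cs ` (G' \<inter> Delta Gamma (Suc q)))
        \<subseteq> fspan X {(\<lambda>x. ecoord \<gamma> (Pint Gamma i E x)) | \<gamma> E. \<gamma> \<in> G' \<inter> Gamma q \<and> nat_interval E}))
    \<longleftrightarrow> (\<forall>\<eta>\<in>G'. cstar_supported \<eta>)"
proof
  assume supported: "\<forall>\<eta>\<in>G'. cstar_supported \<eta>"
  show "fspan X (ds ` (G' \<inter> Gamma q0)) = fspan X (ecoord ` (G' \<inter> Gamma q0))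
      \<and> (\<forall>q\<ge>q0. fspan X (cs ` (G' \<inter> Delta Gamma (Suc q)))
        \<subseteq> fspan X {(\<lambda>x. ecoord \<gamma> (Pint Gamma i E x)) | \<gamma> E. \<gamma> \<in> G' \<inter> Gamma q \<and> nat_interval E})"
    using fspan_dstar_eq_fspan_ecoord[OF supported] fspan_cstar_subset_fspan_Pint_coords[OF supported] assms(1)
    by simp
qed (use outer_dvecs_vanish_if_fspan_conditions[OF assms] cstar_supported_iff_outer_dvecs_vanish in blast)

lemma cstar_supported_iff_ecoord_dvec_eq_0:
  "(\<forall>\<eta>\<in>G'. cstar_supported \<eta>) \<longleftrightarrow> (\<forall>\<gamma>\<in>\<Gamma> - G'. \<forall>\<eta>\<in>G'. ecoord \<eta> (dv \<gamma>) = 0)"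
  unfolding cstar_supported_iff_outer_dvecs_vanish outer_dvecs_vanish_at_def ecoord_def by blast

lemma ecoord_dvec_eq_0_iff_cstar_dvec_eq_0:
  "(\<forall>\<gamma>\<in>\<Gamma> - G'. \<forall>\<eta>\<in>G'. ecoord \<eta> (dv \<gamma>) = 0) \<longleftrightarrow> (\<forall>\<gamma>\<in>\<Gamma> - G'. \<forall>\<eta>\<in>G'. cs \<eta> (dv \<gamma>) = 0)"
proof -
  have "cs \<eta> (dv \<gamma>) = ecoord \<eta> (dv \<gamma>)" if "\<gamma> \<in> \<Gamma> - G'" "\<eta> \<in> G'" for \<gamma> \<eta>
    using cstar_dvec[of \<gamma> \<eta>] that G'_subset by (auto simp: ecoord_def)
  then show ?thesis by auto
qed

end

theorem proposition1p5:
  fixes Gamma :: "nat \<Rightarrow> 'g set" and i :: "nat \<Rightarrow> ('g \<Rightarrow> real) \<Rightarrow> ('g \<Rightarrow> real)"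
    and G' :: "'g set"
  assumes BD: "BD_system Gamma i"
    and inf: "infinite G'" and sub: "G' \<subseteq> BD_Gamma Gamma"
  defines "q0 \<equiv> (LEAST q. 1 \<le> q \<and> G' \<inter> Gamma q \<noteq> {})"
    and "X \<equiv> BD_X Gamma i"
  shows
   "(self_determined Gamma i G'
     \<longleftrightarrow> (\<forall>q\<ge>q0. fspan X (dstar Gamma i ` (G' \<inter> Gamma q)) = fspan X (ecoord ` (G' \<inter> Gamma q))))
  \<and> ((\<forall>q\<ge>q0. fspan X (dstar Gamma i ` (G' \<inter> Gamma q)) = fspan X (ecoord ` (G' \<inter> Gamma q)))
     \<longleftrightarrow> (fspan X (dstar Gamma i ` (G' \<inter> Gamma q0)) = fspan X (ecoord ` (G' \<inter> Gamma q0))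
          \<and> (\<forall>q\<ge>q0. fspan X (cstar Gamma i ` (G' \<inter> Delta Gamma (Suc q)))
                \<subseteq> fspan X {(\<lambda>x. ecoord \<gamma> (Pint Gamma i E x)) | \<gamma> E. \<gamma> \<in> G' \<inter> Gamma q \<and> nat_interval E})))
  \<and> ((fspan X (dstar Gamma i ` (G' \<inter> Gamma q0)) = fspan X (ecoord ` (G' \<inter> Gamma q0))
          \<and> (\<forall>q\<ge>q0. fspan X (cstar Gamma i ` (G' \<inter> Delta Gamma (Suc q)))
                \<subseteq> fspan X {(\<lambda>x. ecoord \<gamma> (Pint Gamma i E x)) | \<gamma> E. \<gamma> \<in> G' \<inter> Gamma q \<and> nat_interval E}))
     \<longleftrightarrow> (\<forall>\<gamma>\<in>BD_Gamma Gamma - G'. \<forall>\<eta>\<in>G'. ecoord \<eta> (dvec Gamma i \<gamma>) = 0))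
  \<and> ((\<forall>\<gamma>\<in>BD_Gamma Gamma - G'. \<forall>\<eta>\<in>G'. ecoord \<eta> (dvec Gamma i \<gamma>) = 0)
     \<longleftrightarrow> (\<forall>\<gamma>\<in>BD_Gamma Gamma - G'. \<forall>\<eta>\<in>G'. cstar Gamma i \<eta> (dvec Gamma i \<gamma>) = 0))"
proof -
  interpret bourgain_delbaen_subset Gamma i G' using BD sub by unfold_locales
  have "G' \<noteq> {}" using inf by auto
  then have q0: "1 \<le> q0" "\<And>\<eta>. \<eta> \<in> G' \<Longrightarrow> q0 \<le> level Gamma \<eta>"
    using Least_meeting_index_ge_1 Least_meeting_index_le_level unfolding q0_def by auto
  show ?thesis
    unfolding X_def
    using self_determined_iff_cstar_supported[OF inf] fspan_dstar_eq_iff_cstar_supported[OF inf q0(1)]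
      fspan_conditions_iff_cstar_supported[OF q0] cstar_supported_iff_ecoord_dvec_eq_0
      ecoord_dvec_eq_0_iff_cstar_dvec_eq_0
    by blast
qed

end
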